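(* If $H$ is a convex subgraph of a graph $G$, then $\chi_{\mu_k}(G)\ge \chi_{\mu_k}(H)$ for every positive integer $k$.
   Context: A subgraph $H$ of $G$ is convex if for all $x,y\in V(H)$, every $x,y$-geodesic (shortest path) of $G$ lies entirely in $H$. For a positive integer $k$, a set $M\subseteq V(G)$ is a $k$-distance mutual-visibility set if for every two vertices $u,v\in M$ there exists a $u,v$-geodesic of length at most $k$ none of whose internal vertices lies in $M$. $\chi_{\mu_k}(G)$ is the minimum cardinality of a partition of $V(G)$ into $k$-distance mutual-visibility sets. *)

theory Defs
  imports Main "HOL-Library.Disjoint_Sets"
begin

definition graph :: "'a set \<Rightarrow> ('a \<times> 'a) set \<Rightarrow> bool" where
  "graph V E \<longleftrightarrow> finite V \<and> E \<subseteq> V \<times> V \<and> sym E \<and> (\<forall>x. (x, x) \<notin> E)"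

definition walk :: "'a set \<Rightarrow> ('a \<times> 'a) set \<Rightarrow> 'a \<Rightarrow> 'a \<Rightarrow> 'a list \<Rightarrow> bool" where
  "walk V E u v xs \<longleftrightarrow> xs \<noteq> [] \<and> hd xs = u \<and> last xs = v \<and> set xs \<subseteq> V \<and>
     (\<forall>i. Suc i < length xs \<longrightarrow> (xs ! i, xs ! Suc i) \<in> E)"

definition walk_edges :: "'a list \<Rightarrow> ('a \<times> 'a) set" where
  "walk_edges xs = {(xs ! i, xs ! Suc i) | i. Suc i < length xs}"

definition walk_len :: "'a list \<Rightarrow> nat" where
  "walk_len xs = length xs - 1"

definition geodesic :: "'a set \<Rightarrow> ('a \<times> 'a) set \<Rightarrow> 'a \<Rightarrow> 'a \<Rightarrow> 'a list \<Rightarrow> bool" where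
  "geodesic V E u v xs \<longleftrightarrow> walk V E u v xs \<and>
     (\<forall>ys. walk V E u v ys \<longrightarrow> walk_len xs \<le> walk_len ys)"

definition subgraph :: "'a set \<Rightarrow> ('a \<times> 'a) set \<Rightarrow> 'a set \<Rightarrow> ('a \<times> 'a) set \<Rightarrow> bool" where
  "subgraph VH EH V E \<longleftrightarrow> VH \<subseteq> V \<and> EH \<subseteq> E"

definition convex_subgraph :: "'a set \<Rightarrow> ('a \<times> 'a) set \<Rightarrow> 'a set \<Rightarrow> ('a \<times> 'a) set \<Rightarrow> bool" where
  "convex_subgraph VH EH V E \<longleftrightarrow> subgraph VH EH V E \<and>
     (\<forall>x\<in>VH. \<forall>y\<in>VH. \<forall>P. geodesic V E x y P \<longrightarrow> set P \<subseteq> VH \<and> walk_edges P \<subseteq> EH)"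

definition internal :: "'a list \<Rightarrow> 'a set" where
  "internal xs = set (butlast (tl xs))"

definition kdist_mv_set :: "nat \<Rightarrow> 'a set \<Rightarrow> ('a \<times> 'a) set \<Rightarrow> 'a set \<Rightarrow> bool" where
  "kdist_mv_set k V E M \<longleftrightarrow> M \<subseteq> V \<and>
     (\<forall>u\<in>M. \<forall>v\<in>M. \<exists>P. geodesic V E u v P \<and> walk_len P \<le> k \<and> internal P \<inter> M = {})"

definition chi_mu :: "nat \<Rightarrow> 'a set \<Rightarrow> ('a \<times> 'a) set \<Rightarrow> nat" where
  "chi_mu k V E = (LEAST n. \<exists>\<P>. partition_on V \<P> \<and> finite \<P> \<and> card \<P> = n \<and>
      (\<forall>M\<in>\<P>. kdist_mv_set k V E M))"

end

theory Submission
  imports Defs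
begin

text \<open>Restricting every class of an optimal partition of \<open>G\<close> to \<open>V(H)\<close> gives a partition of \<open>V(H)\<close>
  with no more classes. Each restricted class is still a \<open>k\<close>-distance mutual-visibility set of \<open>H\<close>:
  a witnessing geodesic of \<open>G\<close> between two vertices of \<open>H\<close> lies in \<open>H\<close> by convexity, hence is a
  geodesic of \<open>H\<close> of the same length, and it avoids the smaller class.\<close>

lemma walk_mono:
  assumes "walk VH EH u v xs" "VH \<subseteq> V" "EH \<subseteq> E"
  shows "walk V E u v xs"
  using assms unfolding walk_def by blast

lemma walk_restrict:
  assumes "walk V E u v xs" "set xs \<subseteq> VH" "walk_edges xs \<subseteq> EH"
  shows "walk VH EH u v xs"
  using assms unfolding walk_def walk_edges_def by blast

lemma geodesic_convex_subgraph:
  assumes "convex_subgraph VH EH V E" "u \<in> VH" "v \<in> VH" "geodesic V E u v P"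
  shows "geodesic VH EH u v P"
proof -
  have sub: "VH \<subseteq> V" "EH \<subseteq> E" and inside: "set P \<subseteq> VH" "walk_edges P \<subseteq> EH"
    using assms by (auto simp: convex_subgraph_def subgraph_def)
  have "walk VH EH u v P"
    using assms(4) inside by (auto simp: geodesic_def intro: walk_restrict)
  moreover have "walk_len P \<le> walk_len ys" if "walk VH EH u v ys" for ys
    using walk_mono[OF that sub] assms(4) by (simp add: geodesic_def)
  ultimately show ?thesis
    by (simp add: geodesic_def)
qed

lemma kdist_mv_set_singleton:
  assumes "x \<in> V"
  shows "kdist_mv_set k V E {x}"
proof -
  have "geodesic V E x x [x]"
    using assms by (auto simp: geodesic_def walk_def walk_len_def)
  then show ?thesis
    using assms by (auto simp: kdist_mv_set_def walk_len_def internal_def)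
qed

lemma kdist_mv_set_convex_subgraph:
  assumes "convex_subgraph VH EH V E" "kdist_mv_set k V E M"
  shows "kdist_mv_set k VH EH (VH \<inter> M)"
  unfolding kdist_mv_set_def
proof (intro conjI ballI)
  fix u v assume "u \<in> VH \<inter> M" "v \<in> VH \<inter> M"
  then obtain P where "geodesic V E u v P" "walk_len P \<le> k" "internal P \<inter> M = {}"
    using assms(2) unfolding kdist_mv_set_def by blast
  with assms(1) \<open>u \<in> VH \<inter> M\<close> \<open>v \<in> VH \<inter> M\<close>
  show "\<exists>P. geodesic VH EH u v P \<and> walk_len P \<le> k \<and> internal P \<inter> (VH \<inter> M) = {}"
    by (blast intro: geodesic_convex_subgraph)
qed blast

lemma chi_mu_le:
  assumes "partition_on V \<P>" "finite \<P>" "\<forall>M\<in>\<P>. kdist_mv_set k V E M"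
  shows "chi_mu k V E \<le> card \<P>"
  unfolding chi_mu_def by (rule Least_le) (use assms in blast)

lemma chi_mu_attained:
  assumes "finite V"
  obtains \<P> where "partition_on V \<P>" "finite \<P>" "card \<P> = chi_mu k V E"
    "\<forall>M\<in>\<P>. kdist_mv_set k V E M"
proof -
  have "\<exists>n \<P>. partition_on V \<P> \<and> finite \<P> \<and> card \<P> = n \<and> (\<forall>M\<in>\<P>. kdist_mv_set k V E M)"
    using partition_on_singletons[of V] assms kdist_mv_set_singleton[of _ V k E] by blast
  from LeastI_ex[OF this] show ?thesis
    using that unfolding chi_mu_def by blast
qed

lemma card_partition_restrict_le:
  assumes "finite \<P>"
  shows "card ((\<inter>) A ` \<P> - {{}}) \<le> card \<P>"
  using assms by (meson Diff_subset card_image_le card_mono finite_imageI le_trans)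

theorem proposition2p5:
  fixes V VH :: "'a set" and E EH :: "('a \<times> 'a) set" and k :: nat
  assumes "graph V E" and "graph VH EH"
    and "convex_subgraph VH EH V E"
    and "k > 0"
  shows "chi_mu k V E \<ge> chi_mu k VH EH"
proof -
  obtain \<P> where \<P>: "partition_on V \<P>" "finite \<P>" "card \<P> = chi_mu k V E"
    "\<forall>M\<in>\<P>. kdist_mv_set k V E M"
    using chi_mu_attained assms(1) unfolding graph_def by metis
  define \<P>H where "\<P>H = (\<inter>) VH ` \<P> - {{}}"
  have "VH \<subseteq> V"
    using assms(3) by (simp add: convex_subgraph_def subgraph_def)
  then have "partition_on VH \<P>H"
    using partition_on_restrict[OF \<P>(1), of VH] by (simp add: \<P>H_def Int_absorb2)
  moreover have "finite \<P>H"
    using \<P>(2) by (simp add: \<P>H_def)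
  moreover have "\<forall>M\<in>\<P>H. kdist_mv_set k VH EH M"
    using \<P>(4) kdist_mv_set_convex_subgraph[OF assms(3)] by (auto simp: \<P>H_def)
  ultimately have "chi_mu k VH EH \<le> card \<P>H"
    by (rule chi_mu_le)
  also have "\<dots> \<le> chi_mu k V E"
    using card_partition_restrict_le[OF \<P>(2)] \<P>(3) by (simp add: \<P>H_def)
  finally show ?thesis .
qed

end
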